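(* Let $\mathcal{F}$, $S(f)$ and $C(f)$ ($f\in\mathcal{F}$) be as in the context, and let $\{V\}\cup\{A_\beta:\beta<\mathfrak{c}\}$ be a pairwise disjoint family of Bernstein sets in $(0,1)$, all disjoint from $\mathbb{Q}$, such that for every $f\in\mathcal{F}$ with $|f[S(f)]|=\mathfrak{c}$ and every $\beta<\mathfrak{c}$ both $C(f)\cap A_\beta$ and $f[C(f)\cap A_\beta]\cap V$ have cardinality $\mathfrak{c}$. Let $X$ and $Y$ be subsets of $(0,1)$ such that $\mathbb{Q}\cap(0,1)\subseteq X$ and such that there is an $\alpha<\mathfrak{c}$ with $A_\alpha\subseteq X$ and $Y\cap(A_\alpha\cup V)=\emptyset$. Then every continuous map $s:\mathbb{A}_X\to\mathbb{A}_Y$ has countable range.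
   Context: $\mathfrak{c}=2^{\aleph_0}$. $\mathcal{F}$ is the set of all functions $f$ such that $\operatorname{dom} f$ is a co-countable subset of $[0,1]$ and $f:\operatorname{dom} f\to[0,1]$ is continuous; $S(f)=\{x\in\operatorname{dom} f:f(x)\neq x\}$, and for each $f\in\mathcal{F}$ a subset $C(f)\subseteq\operatorname{dom} f$ is fixed such that $f$ restricted to $C(f)$ is a bijection onto $f[S(f)]$. A Bernstein set in $[0,1]$ is a set $A$ such that both $A$ and its complement meet every uncountable closed subset of $[0,1]$. Let $D=([0,1]\times\{0,1\})\setminus\{\langle 0,0\rangle,\langle 0,1\rangle\}$, ordered lexicographically. For $X\subseteq(0,1)$ let $\mathbb{A}_X=\{\langle x,i\rangle\in D: x\in X\Rightarrow i=0\}$ (so only points of $(0,1)\setminus X$ are split into two copies), with the order topology of the lexicographic order; points $x\in X$ are identified with $\langle x,0\rangle$. *)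

theory Defs
  imports "HOL-Analysis.Analysis" "HOL-Library.Equipollence"
begin

definition bernstein :: "real set \<Rightarrow> bool" where
  "bernstein A \<longleftrightarrow> (\<forall>K. closed K \<and> K \<subseteq> {0..1} \<and> uncountable K \<longrightarrow>
      A \<inter> K \<noteq> {} \<and> ({0..1} - A) \<inter> K \<noteq> {})"

definition in_F :: "real set \<Rightarrow> (real \<Rightarrow> real) \<Rightarrow> bool" where
  "in_F D f \<longleftrightarrow> D \<subseteq> {0..1} \<and> countable ({0..1} - D) \<and>
      continuous_on D f \<and> f ` D \<subseteq> {0..1}"

definition S_set :: "real set \<Rightarrow> (real \<Rightarrow> real) \<Rightarrow> real set" where
  "S_set D f = {x \<in> D. f x \<noteq> x}"

definition card_c :: "'a set \<Rightarrow> bool" where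
  "card_c A \<longleftrightarrow> A \<approx> (UNIV :: real set)"

definition Dlex :: "(real \<times> nat) set" where
  "Dlex = ({0..1} \<times> {0,1}) - {(0,0),(0,1)}"

definition lex_less :: "real \<times> nat \<Rightarrow> real \<times> nat \<Rightarrow> bool" where
  "lex_less p q \<longleftrightarrow> fst p < fst q \<or> (fst p = fst q \<and> snd p < snd q)"

definition AA :: "real set \<Rightarrow> (real \<times> nat) set" where
  "AA X = {p \<in> Dlex. fst p \<in> X \<longrightarrow> snd p = 0}"

definition AA_top :: "real set \<Rightarrow> (real \<times> nat) topology" where
  "AA_top X = topology_generated_by
     (insert (AA X) ({{p \<in> AA X. lex_less p a} | a. a \<in> AA X} \<union>
                     {{p \<in> AA X. lex_less a p} | a. a \<in> AA X}))"

end

(* Let g x be the first coordinate of s (x, 0).  Continuity of s forces s (x, 0) and s (x, 1)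
   to have the same first coordinate except at countably many x, and g is continuous on the
   co-countable set D of the remaining points, so g belongs to F.

   If x is in X, the point x is not split in A_X; if moreover g x is not in Y, then g x is
   split in A_Y, and the open ray below (g x, 1) or above (g x, 0) pulls back to a two-sided
   neighbourhood of x.  Hence g has a local extremum at x, and there are only countably many
   local extreme values.  As A_alpha is contained in X and V is disjoint from Y, the values of
   g on C(g) and A_alpha that lie in V form a countable set, so g[S(g)] has size less than
   continuum.  The fixed points of g are countable as well: otherwise their closure is an
   uncountable closed set, and the Bernstein set A_alpha meets it outside any given countable
   set, in a fixed point that is a local extreme value.

   Finally, the first coordinates of the range of s form a countable union of compact sets.
   If they were uncountable, they would contain continuum many values avoiding the fixed
   points and the countably many exceptional values; but all such values lie in g[S(g)]. *)

theory Submission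
  imports Defs
begin

section \<open>Countability via rational labels\<close>

lemma countable_by_unique_labels:
  assumes "countable L"
    and "\<And>z. z \<in> Z \<Longrightarrow> \<exists>l\<in>L. P l z"
    and "\<And>l z w. z \<in> Z \<Longrightarrow> w \<in> Z \<Longrightarrow> P l z \<Longrightarrow> P l w \<Longrightarrow> z = w"
  shows "countable Z"
proof -
  obtain f where f: "\<And>z. z \<in> Z \<Longrightarrow> f z \<in> L \<and> P (f z) z"
    using assms(2) by metis
  then have "inj_on f Z"
    using assms(3) by (metis inj_onI)
  moreover have "countable (f ` Z)"
    using f assms(1) by (meson countable_subset image_subsetI)
  ultimately show ?thesis
    using countable_image_inj_on by blast
qed

definition local_extreme_values :: "('a \<Rightarrow> 'a \<Rightarrow> bool) \<Rightarrow> (real \<Rightarrow> 'a) \<Rightarrow> real set \<Rightarrow> 'a set" where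
  "local_extreme_values R g T =
     {g x | x. x \<in> T \<and> (\<exists>a b. a < x \<and> x < b \<and> (\<forall>z\<in>T. a < z \<and> z < b \<longrightarrow> R (g z) (g x)))}"

lemma countable_local_extreme_values:
  assumes "\<And>u v. R u v \<Longrightarrow> R v u \<Longrightarrow> u = v"
  shows "countable (local_extreme_values R g T)"
proof (rule countable_by_unique_labels[OF countable_SIGMA[OF countable_rat countable_rat]])
  let ?P = "\<lambda>(a, b) v. \<exists>x\<in>T. v = g x \<and> a < x \<and> x < b \<and> (\<forall>z\<in>T. a < z \<and> z < b \<longrightarrow> R (g z) (g x))"
  show "\<exists>l\<in>\<rat> \<times> \<rat>. ?P l v" if v: "v \<in> local_extreme_values R g T" for v
  proof -
    obtain x a b where x: "v = g x" "x \<in> T" "a < x" "x < b" "\<forall>z\<in>T. a < z \<and> z < b \<longrightarrow> R (g z) (g x)"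
      using v unfolding local_extreme_values_def by blast
    obtain a' where "a' \<in> \<rat>" "a < a'" "a' < x"
      using Rats_dense_in_real x(3) by blast
    moreover obtain b' where "b' \<in> \<rat>" "x < b'" "b' < b"
      using Rats_dense_in_real x(4) by blast
    ultimately show ?thesis
      using x by (intro bexI[of _ "(a', b')"]) auto
  qed
  show "v = w" if "?P l v" "?P l w" for l v w
    using that assms by (cases l) auto
qed

section \<open>Closed subsets of size continuum\<close>

lemma card_c_iff_lepoll: "card_c A \<longleftrightarrow> (UNIV :: real set) \<lesssim> (A :: real set)"
  unfolding card_c_def
  by (meson eqpoll_imp_lepoll eqpoll_sym lepoll_antisym subset_UNIV subset_imp_lepoll)

lemma card_c_mono: "card_c A \<Longrightarrow> A \<subseteq> B \<Longrightarrow> card_c (B :: real set)"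
  unfolding card_c_iff_lepoll by (meson lepoll_trans subset_imp_lepoll)

lemma card_c_imp_uncountable: "card_c A \<Longrightarrow> uncountable A"
  unfolding card_c_def using countable_eqpoll eqpoll_sym uncountable_UNIV_real by blast

definition condensation_points :: "real set \<Rightarrow> real set" where
  "condensation_points U = {x. \<forall>e>0. uncountable (U \<inter> ball x e)}"

lemma countable_diff_condensation_points: "countable (U - condensation_points U)"
proof -
  define R where "R = {(a, b) \<in> \<rat> \<times> \<rat>. countable (U \<inter> {a<..<b})}"
  have "countable R"
    unfolding R_def by (rule countable_subset[OF _ countable_SIGMA[OF countable_rat countable_rat]]) auto
  then have countable_cover: "countable (\<Union>(a, b)\<in>R. U \<inter> {a<..<b})"
    by (rule countable_UN) (auto simp: R_def)
  have "U - condensation_points U \<subseteq> (\<Union>(a, b)\<in>R. U \<inter> {a<..<b})"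
  proof
    fix x assume x: "x \<in> U - condensation_points U"
    then obtain e where e: "e > 0" "countable (U \<inter> ball x e)"
      unfolding condensation_points_def by auto
    obtain a where a: "a \<in> \<rat>" "x - e < a" "a < x"
      using Rats_dense_in_real[of "x - e" x] e by auto
    obtain b where b: "b \<in> \<rat>" "x < b" "b < x + e"
      using Rats_dense_in_real[of x "x + e"] e by auto
    have "U \<inter> {a<..<b} \<subseteq> U \<inter> ball x e"
      using a b by (auto simp: dist_real_def)
    then have "countable (U \<inter> {a<..<b})"
      using e(2) by (rule countable_subset)
    then have "(a, b) \<in> R"
      using a b unfolding R_def by simp
    then show "x \<in> (\<Union>(a, b)\<in>R. U \<inter> {a<..<b})"
      using x a b by force
  qed
  then show ?thesis
    using countable_cover by (rule countable_subset)
qed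

definition splittable :: "real set \<Rightarrow> real set \<Rightarrow> bool" where
  "splittable K I \<longleftrightarrow> compact I \<and> uncountable (K \<inter> interior I)"

lemma splittable_cball:
  assumes "x \<in> condensation_points U" "U \<subseteq> K" "e > 0"
  shows "splittable K (cball x e)"
  using assms countable_subset[of "U \<inter> ball x e" "K \<inter> ball x e"]
  unfolding splittable_def condensation_points_def by auto

lemma two_condensation_points:
  assumes "uncountable U"
  obtains p q where "p \<in> U \<inter> condensation_points U" "q \<in> U \<inter> condensation_points U" "p \<noteq> q"
proof -
  have "U = (U - condensation_points U) \<union> (U \<inter> condensation_points U)"
    by blast
  then have "uncountable (U \<inter> condensation_points U)"
    using assms countable_diff_condensation_points[of U] by (metis countable_Un)
  then have "infinite (U \<inter> condensation_points U)"
    using countable_finite by blast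
  then obtain p where p: "p \<in> U \<inter> condensation_points U"
    using infinite_imp_nonempty by blast
  have "infinite (U \<inter> condensation_points U - {p})"
    using \<open>infinite (U \<inter> condensation_points U)\<close> by simp
  then obtain q where "q \<in> U \<inter> condensation_points U" "q \<noteq> p"
    using infinite_imp_nonempty by blast
  with p show ?thesis
    using that by blast
qed

lemma splittable_split:
  assumes "splittable K I"
  shows "\<exists>L R. splittable K L \<and> splittable K R \<and> L \<subseteq> I \<and> R \<subseteq> I \<and> L \<inter> R = {} \<and> n \<notin> L \<and> n \<notin> R"
proof -
  define U where "U = K \<inter> interior I - {n}"
  have "uncountable U"
    using assms by (simp add: U_def splittable_def)
  then obtain p q where p: "p \<in> U \<inter> condensation_points U" and q: "q \<in> U \<inter> condensation_points U"
    and "p \<noteq> q"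
    by (rule two_condensation_points)
  then have pq: "p \<in> U" "q \<in> U" "p \<in> condensation_points U" "q \<in> condensation_points U" "p \<noteq> q"
    by auto
  have "open (interior I)" "p \<in> interior I" "q \<in> interior I"
    using pq by (auto simp: U_def)
  then obtain e1 e2 where e12: "e1 > 0" "cball p e1 \<subseteq> interior I" "e2 > 0" "cball q e2 \<subseteq> interior I"
    by (meson open_contains_cball)
  define e where "e = Min {e1, e2, dist p q / 3, dist p n / 2, dist q n / 2}"
  have pos: "0 < dist p q" "0 < dist p n" "0 < dist q n"
    using pq by (auto simp: U_def)
  have le: "e \<le> e1" "e \<le> e2" "e \<le> dist p q / 3" "e \<le> dist p n / 2" "e \<le> dist q n / 2"
    by (simp_all add: e_def)
  have "e > 0"
    using e12 pos by (simp add: e_def)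
  then have e: "e + e < dist p q" "e < dist p n" "e < dist q n"
    using le pos by linarith+
  have "U \<subseteq> K"
    by (auto simp: U_def)
  then have "splittable K (cball p e)" "splittable K (cball q e)"
    using pq(3,4) \<open>e > 0\<close> splittable_cball by blast+
  moreover have "cball p e \<subseteq> I" "cball q e \<subseteq> I"
    using subset_cball[OF le(1), of p] subset_cball[OF le(2), of q] e12 interior_subset by blast+
  moreover have "cball p e \<inter> cball q e = {}"
    using e(1) by (rule disjoint_cballI)
  moreover have "n \<notin> cball p e" "n \<notin> cball q e"
    using e(2,3) by (auto simp: dist_commute)
  ultimately show ?thesis
    by (intro exI[of _ "cball p e"] exI[of _ "cball q e"]) simp
qed

definition halves :: "real set \<Rightarrow> real \<Rightarrow> real set \<Rightarrow> real set \<times> real set" where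
  "halves K n I = (SOME (L, R). splittable K L \<and> splittable K R \<and> L \<subseteq> I \<and> R \<subseteq> I \<and>
     L \<inter> R = {} \<and> n \<notin> L \<and> n \<notin> R)"

lemma halves_spec:
  assumes "splittable K I" "halves K n I = (L, R)"
  shows "splittable K L" "splittable K R" "L \<subseteq> I" "R \<subseteq> I" "L \<inter> R = {}" "n \<notin> L" "n \<notin> R"
proof -
  have "case halves K n I of (L, R) \<Rightarrow> splittable K L \<and> splittable K R \<and> L \<subseteq> I \<and> R \<subseteq> I \<and>
     L \<inter> R = {} \<and> n \<notin> L \<and> n \<notin> R"
    unfolding halves_def by (rule someI_ex) (use splittable_split[OF assms(1), of n] in auto)
  then show "splittable K L" "splittable K R" "L \<subseteq> I" "R \<subseteq> I" "L \<inter> R = {}" "n \<notin> L" "n \<notin> R"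
    using assms(2) by auto
qed

text \<open>A Cantor scheme inside \<open>K\<close>: a branch is a set \<open>B \<subseteq> \<nat>\<close>, and at level \<open>k\<close> both
  children leave out the point \<open>e k\<close>.\<close>

fun cantor_node :: "real set \<Rightarrow> (nat \<Rightarrow> real) \<Rightarrow> real set \<Rightarrow> nat \<Rightarrow> nat set \<Rightarrow> real set" where
  "cantor_node K e I 0 B = I"
| "cantor_node K e I (Suc k) B =
     (if k \<in> B then snd else fst) (halves K (e k) (cantor_node K e I k B))"

lemma splittable_cantor_node:
  assumes "splittable K I"
  shows "splittable K (cantor_node K e I k B)"
proof (induction k)
  case (Suc k)
  then show ?case
    using halves_spec(1,2)[OF Suc] by (cases "halves K (e k) (cantor_node K e I k B)") auto
qed (simp add: assms)

lemma cantor_node_Suc: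
  assumes "splittable K I"
  shows "cantor_node K e I (Suc k) B \<subseteq> cantor_node K e I k B" "e k \<notin> cantor_node K e I (Suc k) B"
proof -
  obtain L R where LR: "halves K (e k) (cantor_node K e I k B) = (L, R)"
    by fastforce
  show "cantor_node K e I (Suc k) B \<subseteq> cantor_node K e I k B" "e k \<notin> cantor_node K e I (Suc k) B"
    using halves_spec(3,4,6,7)[OF splittable_cantor_node[OF assms] LR] LR by simp_all
qed

lemma cantor_node_antimono:
  assumes "splittable K I" "m \<le> k"
  shows "cantor_node K e I k B \<subseteq> cantor_node K e I m B"
  using lift_Suc_antimono_le[of "\<lambda>k. cantor_node K e I k B"] cantor_node_Suc(1)[OF assms(1)] assms(2)
  by blast

lemma cantor_node_cong: "B \<inter> {..<k} = B' \<inter> {..<k} \<Longrightarrow> cantor_node K e I k B = cantor_node K e I k B'"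
proof (induction k)
  case (Suc k)
  have "B \<inter> {..<k} = (B \<inter> {..<Suc k}) \<inter> {..<k}" "B' \<inter> {..<k} = (B' \<inter> {..<Suc k}) \<inter> {..<k}"
    by auto
  then have "B \<inter> {..<k} = B' \<inter> {..<k}"
    using Suc.prems by simp
  moreover have "k \<in> B \<longleftrightarrow> k \<in> B'"
    using Suc.prems by (metis Int_iff lessI lessThan_iff)
  ultimately show ?case
    using Suc.IH by simp
qed simp

lemma cantor_node_disjoint:
  assumes "splittable K I" "B \<inter> {..<k} = B' \<inter> {..<k}" "k \<in> B \<longleftrightarrow> k \<notin> B'"
  shows "cantor_node K e I (Suc k) B \<inter> cantor_node K e I (Suc k) B' = {}"
  using halves_spec(5)[OF splittable_cantor_node[OF assms(1)]] cantor_node_cong[OF assms(2), of K e I] assms(3)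
  by (cases "halves K (e k) (cantor_node K e I k B)") (auto simp: Int_commute)

lemma finite_range_cantor_node: "finite (range (cantor_node K e I k))"
proof -
  have "cantor_node K e I k B = cantor_node K e I k (B \<inter> {..<k})" for B
    by (rule cantor_node_cong) auto
  then have "range (cantor_node K e I k) \<subseteq> cantor_node K e I k ` Pow {..<k}"
    by (intro image_subsetI) (metis Int_lower2 PowI image_eqI)
  then show ?thesis
    by (rule finite_subset) simp
qed

lemma exists_splittable_cball:
  assumes "uncountable K"
  obtains r where "splittable K (cball 0 r)"
proof -
  have "K \<subseteq> (\<Union>n. K \<inter> ball 0 (real n))"
  proof
    fix x assume "x \<in> K"
    moreover obtain n where "\<bar>x\<bar> < real n"
      using reals_Archimedean2 by blast
    ultimately show "x \<in> (\<Union>n. K \<inter> ball 0 (real n))"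
      by auto
  qed
  have "\<exists>n. uncountable (K \<inter> ball 0 (real n))"
  proof (rule ccontr)
    assume "\<nexists>n. uncountable (K \<inter> ball 0 (real n))"
    then have "countable (\<Union>n. K \<inter> ball 0 (real n))"
      by (simp add: countable_UN del: UN_simps)
    then show False
      using countable_subset[OF \<open>K \<subseteq> _\<close>] assms by blast
  qed
  then obtain n where "uncountable (K \<inter> ball 0 (real n))"
    by blast
  then have "splittable K (cball 0 (real n))"
    by (simp add: splittable_def)
  then show ?thesis
    by (rule that)
qed

lemma cantor_branch_nonempty:
  assumes "closed K" "splittable K I"
  shows "\<exists>x. \<forall>k. x \<in> K \<inter> cantor_node K e I k B"
proof -
  have "\<Inter>(range (\<lambda>k. K \<inter> cantor_node K e I k B)) \<noteq> {}"
  proof (rule compact_nest)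
    fix k
    have node: "splittable K (cantor_node K e I k B)"
      using assms(2) by (rule splittable_cantor_node)
    then show "compact (K \<inter> cantor_node K e I k B)"
      using assms(1) by (simp add: splittable_def closed_Int_compact)
    have "uncountable (K \<inter> interior (cantor_node K e I k B))"
      using node by (simp add: splittable_def)
    then obtain x where "x \<in> K \<inter> interior (cantor_node K e I k B)"
      by (metis countable_empty ex_in_conv)
    then show "K \<inter> cantor_node K e I k B \<noteq> {}"
      using interior_subset by blast
  next
    fix m k :: nat assume "m \<le> k"
    then show "K \<inter> cantor_node K e I k B \<subseteq> K \<inter> cantor_node K e I m B"
      using cantor_node_antimono[OF assms(2)] by blast
  qed
  then show ?thesis
    by blast
qed

lemma inj_cantor_branch_points:
  assumes "splittable K I" "\<And>B k. z B \<in> cantor_node K e I k B"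
  shows "inj z"
proof (rule injI, rule ccontr)
  fix B B' assume "z B = z B'" "B \<noteq> B'"
  then have "\<exists>k. (k \<in> B) \<noteq> (k \<in> B')"
    by blast
  then obtain k where k: "(k \<in> B) \<noteq> (k \<in> B')" and below: "\<And>i. i < k \<Longrightarrow> (i \<in> B) = (i \<in> B')"
    using exists_least_iff[of "\<lambda>k. (k \<in> B) \<noteq> (k \<in> B')"] by blast
  have "B \<inter> {..<k} = B' \<inter> {..<k}"
    using below by auto
  then have "cantor_node K e I (Suc k) B \<inter> cantor_node K e I (Suc k) B' = {}"
    using cantor_node_disjoint[OF assms(1)] k by blast
  then show False
    using assms(2)[of B "Suc k"] assms(2)[of B' "Suc k"] \<open>z B = z B'\<close> by auto
qed

lemma closed_cantor_set:
  assumes "closed K" "splittable K I"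
  shows "closed (\<Inter>k. K \<inter> \<Union>(range (cantor_node K e I k)))"
proof -
  have "closed (\<Union>(range (cantor_node K e I k)))" for k
    using splittable_cantor_node[OF assms(2)] finite_range_cantor_node[of K e I k]
    by (intro closed_Union) (auto simp: splittable_def compact_imp_closed)
  then show ?thesis
    using assms(1) by blast
qed

lemma closed_continuum_subset_avoiding:
  fixes K N :: "real set"
  assumes "closed K" "uncountable K" "countable N"
  obtains P where "closed P" "P \<subseteq> K - N" "card_c P"
proof -
  obtain r where root: "splittable K (cball 0 r)"
    using exists_splittable_cball assms(2) by blast
  define e where "e = from_nat_into (insert 0 N)"
  have "N \<subseteq> range e"
    unfolding e_def using range_from_nat_into[of "insert 0 N"] assms(3) by auto
  define P where "P = (\<Inter>k. K \<inter> \<Union>(range (cantor_node K e (cball 0 r) k)))"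
  have "closed P"
    unfolding P_def using assms(1) root by (rule closed_cantor_set)
  have "x \<notin> P" if "x \<in> N" for x
  proof
    assume "x \<in> P"
    obtain m where "x = e m"
      using \<open>N \<subseteq> range e\<close> \<open>x \<in> N\<close> by blast
    moreover obtain B where "x \<in> cantor_node K e (cball 0 r) (Suc m) B"
      using \<open>x \<in> P\<close> unfolding P_def by blast
    ultimately show False
      using cantor_node_Suc(2)[OF root] by metis
  qed
  then have "P \<subseteq> K - N"
    unfolding P_def by blast
  obtain z where z: "\<And>B k. z B \<in> K \<inter> cantor_node K e (cball 0 r) k B"
    using cantor_branch_nonempty[OF assms(1) root] by metis
  then have "inj z"
    using inj_cantor_branch_points[OF root] by blast
  moreover have "range z \<subseteq> P"
    using z unfolding P_def by blast
  ultimately have "(UNIV :: nat set set) \<lesssim> P"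
    unfolding lepoll_def by blast
  then have "card_c P"
    unfolding card_c_iff_lepoll using nat_sets_eqpoll_reals eqpoll_sym lepoll_trans1 by blast
  with \<open>closed P\<close> \<open>P \<subseteq> K - N\<close> show ?thesis
    by (rule that)
qed

lemma bernstein_meets_avoiding:
  assumes "bernstein A" "closed K" "K \<subseteq> {0..1}" "uncountable K" "countable N"
  obtains x where "x \<in> A \<inter> K" "x \<notin> N"
proof -
  obtain P where P: "closed P" "P \<subseteq> K - N" "card_c P"
    by (rule closed_continuum_subset_avoiding[OF assms(2,4,5)])
  have "P \<subseteq> {0..1}"
    using P(2) assms(3) by blast
  moreover have "uncountable P"
    using P(3) by (rule card_c_imp_uncountable)
  ultimately have "A \<inter> P \<noteq> {}"
    using assms(1) P(1) by (simp add: bernstein_def)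
  then obtain x where "x \<in> A \<inter> P"
    by blast
  then show ?thesis
    using P(2) by (intro that) auto
qed

lemma countable_fixpoints_bernstein:
  assumes g: "continuous_on D g" and D: "D \<subseteq> {0..1}" "countable ({0..1} - D)"
    and A: "bernstein A" and M: "countable M"
    and fix_in_M: "\<And>x. x \<in> A \<inter> D \<Longrightarrow> g x = x \<Longrightarrow> x \<in> M"
  shows "countable {x \<in> D. g x = x}"
proof (rule ccontr)
  let ?F = "{x \<in> D. g x = x}"
  assume "uncountable ?F"
  have "closedin (top_of_set D) {x \<in> D. g x - x = 0}"
    by (intro continuous_closedin_preimage_constant continuous_intros g)
  then obtain T where T: "closed T" "?F = D \<inter> T"
    unfolding closedin_closed by auto
  have closure_F: "closure ?F \<inter> D \<subseteq> ?F"
    using T closure_minimal[of ?F T] by blast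
  have "closure ?F \<subseteq> {0..1}"
    using D(1) by (intro closure_minimal) auto
  moreover have "uncountable (closure ?F)"
    using \<open>uncountable ?F\<close> countable_subset[OF closure_subset] by blast
  moreover have "countable (M \<union> ({0..1} - D))"
    using M D(2) by simp
  ultimately obtain x where x: "x \<in> A \<inter> closure ?F" "x \<notin> M \<union> ({0..1} - D)"
    by (rule bernstein_meets_avoiding[OF A closed_closure])
  then have "x \<in> D"
    using \<open>closure ?F \<subseteq> {0..1}\<close> by blast
  then have "x \<in> A \<inter> D" "g x = x"
    using x(1) closure_F by auto
  then show False
    using fix_in_M x(2) by blast
qed

section \<open>The order topology of the split interval\<close>

lemma mem_AA: "(x, i) \<in> AA X \<longleftrightarrow> 0 < x \<and> x \<le> 1 \<and> (i = 0 \<or> i = 1 \<and> x \<notin> X)"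
  by (auto simp: AA_def Dlex_def)

lemma topspace_AA_top [simp]: "topspace (AA_top X) = AA X"
  unfolding AA_top_def by auto

lemma openin_AA_top_below: "a \<in> AA X \<Longrightarrow> openin (AA_top X) {p \<in> AA X. lex_less p a}"
  unfolding AA_top_def by (rule topology_generated_by_Basis) blast

lemma openin_AA_top_above: "a \<in> AA X \<Longrightarrow> openin (AA_top X) {p \<in> AA X. lex_less a p}"
  unfolding AA_top_def by (rule topology_generated_by_Basis) blast

text \<open>In the order topology the left copy \<open>(x, 0)\<close> of a split point has the neighbourhoods
  \<open>]a, (x, 0)]\<close>, the right copy \<open>(x, 1)\<close> has \<open>[(x, 1), b[\<close>, and an unsplit point \<open>x \<in> X\<close>
  has two-sided ones.\<close>

definition has_left_interval :: "real set \<Rightarrow> (real \<times> nat) set \<Rightarrow> real \<Rightarrow> bool" where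
  "has_left_interval X U x \<longleftrightarrow> (\<exists>a<x. \<forall>q\<in>AA X. a < fst q \<and> fst q < x \<longrightarrow> q \<in> U)"

definition has_right_interval :: "real set \<Rightarrow> (real \<times> nat) set \<Rightarrow> real \<Rightarrow> bool" where
  "has_right_interval X U x \<longleftrightarrow> (\<exists>b>x. \<forall>q\<in>AA X. x < fst q \<and> fst q < b \<longrightarrow> q \<in> U)"

definition side_open :: "real set \<Rightarrow> (real \<times> nat) set \<Rightarrow> bool" where
  "side_open X U \<longleftrightarrow> (\<forall>p\<in>U \<inter> AA X.
     (snd p = 0 \<longrightarrow> has_left_interval X U (fst p)) \<and>
     (fst p \<in> X \<or> snd p = 1 \<longrightarrow> has_right_interval X U (fst p)))"

lemma has_left_interval_Int:
  assumes "has_left_interval X U x" "has_left_interval X V x"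
  shows "has_left_interval X (U \<inter> V) x"
proof -
  obtain a a' where "a < x" "\<forall>q\<in>AA X. a < fst q \<and> fst q < x \<longrightarrow> q \<in> U"
    "a' < x" "\<forall>q\<in>AA X. a' < fst q \<and> fst q < x \<longrightarrow> q \<in> V"
    using assms unfolding has_left_interval_def by blast
  then show ?thesis
    unfolding has_left_interval_def by (intro exI[of _ "max a a'"]) auto
qed

lemma has_right_interval_Int:
  assumes "has_right_interval X U x" "has_right_interval X V x"
  shows "has_right_interval X (U \<inter> V) x"
proof -
  obtain b b' where "x < b" "\<forall>q\<in>AA X. x < fst q \<and> fst q < b \<longrightarrow> q \<in> U"
    "x < b'" "\<forall>q\<in>AA X. x < fst q \<and> fst q < b' \<longrightarrow> q \<in> V"
    using assms unfolding has_right_interval_def by blast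
  then show ?thesis
    unfolding has_right_interval_def by (intro exI[of _ "min b b'"]) auto
qed

lemma has_left_interval_mono: "has_left_interval X U x \<Longrightarrow> U \<subseteq> V \<Longrightarrow> has_left_interval X V x"
  unfolding has_left_interval_def by blast

lemma has_right_interval_mono: "has_right_interval X U x \<Longrightarrow> U \<subseteq> V \<Longrightarrow> has_right_interval X V x"
  unfolding has_right_interval_def by blast

lemma side_open_Int: "side_open X U \<Longrightarrow> side_open X V \<Longrightarrow> side_open X (U \<inter> V)"
  unfolding side_open_def by (simp add: has_left_interval_Int has_right_interval_Int)

lemma side_open_Union:
  assumes "\<And>U. U \<in> \<U> \<Longrightarrow> side_open X U"
  shows "side_open X (\<Union>\<U>)"
  unfolding side_open_def
proof
  fix p assume "p \<in> \<Union>\<U> \<inter> AA X"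
  then obtain U where U: "U \<in> \<U>" "p \<in> U \<inter> AA X"
    by blast
  then have "(snd p = 0 \<longrightarrow> has_left_interval X U (fst p)) \<and>
      (fst p \<in> X \<or> snd p = 1 \<longrightarrow> has_right_interval X U (fst p))"
    using assms unfolding side_open_def by blast
  moreover have "U \<subseteq> \<Union>\<U>"
    using U(1) by blast
  ultimately show "(snd p = 0 \<longrightarrow> has_left_interval X (\<Union>\<U>) (fst p)) \<and>
      (fst p \<in> X \<or> snd p = 1 \<longrightarrow> has_right_interval X (\<Union>\<U>) (fst p))"
    using has_left_interval_mono has_right_interval_mono by metis
qed

lemma side_open_AA: "side_open X (AA X)"
  unfolding side_open_def has_left_interval_def has_right_interval_def
  by (auto intro: lt_ex gt_ex)

lemma side_open_below: "a \<in> AA X \<Longrightarrow> side_open X {p \<in> AA X. lex_less p a}"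
  unfolding side_open_def
proof (intro ballI conjI impI)
  fix p assume a: "a \<in> AA X" and p: "p \<in> {p \<in> AA X. lex_less p a} \<inter> AA X"
  show "has_left_interval X {p \<in> AA X. lex_less p a} (fst p)"
    unfolding has_left_interval_def
    using p by (intro exI[of _ "fst p - 1"]) (auto simp: lex_less_def)
  assume "fst p \<in> X \<or> snd p = 1"
  then have "fst p < fst a"
    using a p by (cases a, cases p) (auto simp: lex_less_def mem_AA)
  then show "has_right_interval X {p \<in> AA X. lex_less p a} (fst p)"
    unfolding has_right_interval_def by (intro exI[of _ "fst a"]) (auto simp: lex_less_def)
qed

lemma side_open_above: "a \<in> AA X \<Longrightarrow> side_open X {p \<in> AA X. lex_less a p}"
  unfolding side_open_def
proof (intro ballI conjI impI)
  fix p assume p: "p \<in> {p \<in> AA X. lex_less a p} \<inter> AA X"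
  show "has_right_interval X {p \<in> AA X. lex_less a p} (fst p)"
    unfolding has_right_interval_def
    using p by (intro exI[of _ "fst p + 1"]) (auto simp: lex_less_def)
  assume "snd p = 0"
  then have "fst a < fst p"
    using p by (auto simp: lex_less_def)
  then show "has_left_interval X {p \<in> AA X. lex_less a p} (fst p)"
    unfolding has_left_interval_def by (intro exI[of _ "fst a"]) (auto simp: lex_less_def)
qed

lemma openin_AA_top_imp_side_open:
  assumes "openin (AA_top X) U"
  shows "side_open X U"
proof -
  have "generate_topology_on (insert (AA X) ({{p \<in> AA X. lex_less p a} | a. a \<in> AA X} \<union>
      {{p \<in> AA X. lex_less a p} | a. a \<in> AA X})) U"
    using assms unfolding AA_top_def by (rule openin_topology_generated_by)
  then show ?thesis
  proof (induction rule: generate_topology_on.induct)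
    case Empty
    then show ?case
      by (simp add: side_open_def)
  next
    case (Int U V)
    then show ?case
      by (blast intro: side_open_Int)
  next
    case (UN \<U>)
    then show ?case
      by (blast intro: side_open_Union)
  next
    case (Basis U)
    then show ?case
      using side_open_AA side_open_below side_open_above by blast
  qed
qed

lemma openin_AA_top_left:
  assumes "openin (AA_top X) U" "(x, 0) \<in> U"
  obtains a where "a < x" "\<And>q. q \<in> AA X \<Longrightarrow> a < fst q \<Longrightarrow> fst q < x \<Longrightarrow> q \<in> U"
proof -
  have "(x, 0) \<in> U \<inter> AA X"
    using assms openin_subset by fastforce
  from bspec[OF openin_AA_top_imp_side_open[OF assms(1), unfolded side_open_def] this]
  have "has_left_interval X U x"
    by simp
  then show ?thesis
    using that unfolding has_left_interval_def by blast
qed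

lemma openin_AA_top_right:
  assumes "openin (AA_top X) U" "(x, i) \<in> U" "x \<in> X \<or> i = 1"
  obtains b where "x < b" "\<And>q. q \<in> AA X \<Longrightarrow> x < fst q \<Longrightarrow> fst q < b \<Longrightarrow> q \<in> U"
proof -
  have "(x, i) \<in> U \<inter> AA X"
    using assms openin_subset by fastforce
  from bspec[OF openin_AA_top_imp_side_open[OF assms(1), unfolded side_open_def] this]
  have "has_right_interval X U x"
    using assms(3) by auto
  then show ?thesis
    using that unfolding has_right_interval_def by blast
qed

lemma openin_AA_top_fibre:
  assumes "openin (AA_top X) U" "0 < x" "x \<le> 1" "\<And>i. (x, i) \<in> AA X \<Longrightarrow> (x, i) \<in> U"
  obtains a b where "a < x" "x < b" "\<And>q. q \<in> AA X \<Longrightarrow> a < fst q \<Longrightarrow> fst q < b \<Longrightarrow> q \<in> U"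
proof -
  have x0: "(x, 0) \<in> U"
    using assms by (simp add: mem_AA)
  obtain a where a: "a < x" "\<And>q. q \<in> AA X \<Longrightarrow> a < fst q \<Longrightarrow> fst q < x \<Longrightarrow> q \<in> U"
    using openin_AA_top_left[OF assms(1) x0] by blast
  obtain i where "(x, i) \<in> U" "x \<in> X \<or> i = 1"
    using x0 assms by (metis mem_AA)
  then obtain b where b: "x < b" "\<And>q. q \<in> AA X \<Longrightarrow> x < fst q \<Longrightarrow> fst q < b \<Longrightarrow> q \<in> U"
    using openin_AA_top_right[OF assms(1)] by blast
  have "q \<in> U" if "q \<in> AA X" "a < fst q" "fst q < b" for q
    using a(2) b(2) assms(4) that by (cases q) (metis fst_conv linorder_neq_iff)
  then show ?thesis
    using a(1) b(1) that by blast
qed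

lemma openin_AA_top_fst_less: "openin (AA_top X) {p \<in> AA X. fst p < r}"
proof (cases "1 < r")
  case True
  then have "{p \<in> AA X. fst p < r} = topspace (AA_top X)"
    by (auto simp: AA_def Dlex_def)
  then show ?thesis
    by (metis openin_topspace)
next
  case False
  show ?thesis
  proof (subst openin_subopen, intro ballI)
    fix q assume q: "q \<in> {p \<in> AA X. fst p < r}"
    define t where "t = (fst q + r) / 2"
    have "(t, 0) \<in> AA X" "fst q < t"
      using q False by (cases q; auto simp: t_def mem_AA)+
    then show "\<exists>T. openin (AA_top X) T \<and> q \<in> T \<and> T \<subseteq> {p \<in> AA X. fst p < r}"
      using q by (intro exI[of _ "{p \<in> AA X. lex_less p (t, 0)}"] conjI openin_AA_top_below)
        (auto simp: lex_less_def t_def)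
  qed
qed

lemma openin_AA_top_fst_greater: "openin (AA_top X) {p \<in> AA X. r < fst p}"
proof (cases "r \<le> 0")
  case True
  then have "{p \<in> AA X. r < fst p} = topspace (AA_top X)"
    by (auto simp: AA_def Dlex_def)
  then show ?thesis
    by (metis openin_topspace)
next
  case False
  show ?thesis
  proof (subst openin_subopen, intro ballI)
    fix q assume q: "q \<in> {p \<in> AA X. r < fst p}"
    define t where "t = (fst q + r) / 2"
    have "(t, 0) \<in> AA X" "t < fst q"
      using q False by (cases q; auto simp: t_def mem_AA)+
    then show "\<exists>T. openin (AA_top X) T \<and> q \<in> T \<and> T \<subseteq> {p \<in> AA X. r < fst p}"
      using q by (intro exI[of _ "{p \<in> AA X. lex_less (t, 0) p}"] conjI openin_AA_top_above)
        (auto simp: lex_less_def t_def)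
  qed
qed

lemma continuous_map_fst_AA_top: "continuous_map (AA_top X) euclideanreal fst"
  unfolding continuous_map_upper_lower_semicontinuous_lt
  using openin_AA_top_fst_less openin_AA_top_fst_greater by simp

lemma finite_subcover_near_fibre:
  assumes \<U>: "\<forall>U\<in>\<U>. openin (AA_top X) U" and fibre: "\<And>i. (x, i) \<in> AA X \<Longrightarrow> (x, i) \<in> \<Union>\<U>"
    and x: "0 < x" "x \<le> 1"
  shows "\<exists>\<W> a b. finite \<W> \<and> \<W> \<subseteq> \<U> \<and> a < x \<and> x < b \<and>
    (\<forall>q\<in>AA X. a < fst q \<and> fst q < b \<longrightarrow> q \<in> \<Union>\<W>)"
proof -
  obtain U where U: "U \<in> \<U>" "(x, 0) \<in> U"
    using fibre[of 0] x by (auto simp: mem_AA)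
  obtain U' where U': "U' \<in> \<U>" "(x, 1) \<in> AA X \<longrightarrow> (x, 1) \<in> U'"
    using fibre[of 1] U(1) by blast
  have "(x, i) \<in> U \<union> U'" if "(x, i) \<in> AA X" for i
    using that U U' by (auto simp: mem_AA)
  moreover have "openin (AA_top X) (U \<union> U')"
    using \<U> U U' by blast
  ultimately obtain a b where "a < x" "x < b" "\<forall>q\<in>AA X. a < fst q \<and> fst q < b \<longrightarrow> q \<in> U \<union> U'"
    using openin_AA_top_fibre[of X "U \<union> U'" x] x by metis
  then show ?thesis
    using U U' by (intro exI[of _ "{U, U'}"]) auto
qed

lemma compactin_AA_top_fst_ge:
  assumes "0 < c"
  shows "compactin (AA_top X) {p \<in> AA X. c \<le> fst p}"
  unfolding compactin_def
proof (intro conjI allI impI)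
  fix \<U> assume \<U>: "(\<forall>U\<in>\<U>. openin (AA_top X) U) \<and> {p \<in> AA X. c \<le> fst p} \<subseteq> \<Union>\<U>"
  define covers where "covers x \<W> a b \<longleftrightarrow> finite \<W> \<and> \<W> \<subseteq> \<U> \<and> a < x \<and> x < b \<and>
      (\<forall>q\<in>AA X. a < fst q \<and> fst q < b \<longrightarrow> q \<in> \<Union>\<W>)" for x \<W> a b
  have "\<exists>\<W> a b. covers x \<W> a b" if x: "x \<in> {c..1}" for x
  proof -
    have "(x, i) \<in> \<Union>\<U>" if "(x, i) \<in> AA X" for i
      using subsetD[OF conjunct2[OF \<U>], of "(x, i)"] that x by simp
    then show ?thesis
      unfolding covers_def using \<U> x assms by (intro finite_subcover_near_fibre) auto
  qed
  then obtain \<W> a b where cover: "\<And>x. x \<in> {c..1} \<Longrightarrow> covers x (\<W> x) (a x) (b x)"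
    by metis
  have "{c..1} \<subseteq> (\<Union>x\<in>{c..1}. {a x<..<b x})"
    using cover by (fastforce simp: covers_def)
  from compactE_image[OF compact_Icc _ this]
  obtain C where C: "C \<subseteq> {c..1}" "finite C" "{c..1} \<subseteq> (\<Union>x\<in>C. {a x<..<b x})"
    by auto
  show "\<exists>\<F>. finite \<F> \<and> \<F> \<subseteq> \<U> \<and> {p \<in> AA X. c \<le> fst p} \<subseteq> \<Union>\<F>"
  proof (intro exI conjI)
    have C_covers: "covers x (\<W> x) (a x) (b x)" if "x \<in> C" for x
      using that C(1) cover by blast
    then have "finite (\<W> x)" "\<W> x \<subseteq> \<U>" if "x \<in> C" for x
      using that unfolding covers_def by blast+
    then show "finite (\<Union>(\<W> ` C))" "\<Union>(\<W> ` C) \<subseteq> \<U>"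
      using C(2) by auto
    show "{p \<in> AA X. c \<le> fst p} \<subseteq> \<Union>(\<Union>(\<W> ` C))"
    proof
      fix p assume p: "p \<in> {p \<in> AA X. c \<le> fst p}"
      then have "fst p \<in> {c..1}"
        by (cases p) (auto simp: mem_AA)
      then obtain x where x: "x \<in> C" "a x < fst p" "fst p < b x"
        using C(3) by auto
      have "covers x (\<W> x) (a x) (b x)"
        using x(1) by (rule C_covers)
      then have "p \<in> \<Union>(\<W> x)"
        using x p unfolding covers_def by blast
      then show "p \<in> \<Union>(\<Union>(\<W> ` C))"
        using x(1) by blast
    qed
  qed
qed auto

lemma closed_image_AA_top_fst_ge:
  assumes "continuous_map (AA_top X) euclideanreal h" "0 < c"
  shows "closed (h ` {p \<in> AA X. c \<le> fst p})"
  using image_compactin[OF compactin_AA_top_fst_ge[OF assms(2)] assms(1)]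
  by (simp add: compact_imp_closed)

section \<open>Continuous maps on the split interval\<close>

definition jumps :: "real set \<Rightarrow> (real \<times> nat \<Rightarrow> real) \<Rightarrow> real set" where
  "jumps X h = {x \<in> {0<..<1} - X. h (x, 0) \<noteq> h (x, 1)}"

text \<open>Label such an \<open>x\<close> by rationals \<open>r\<close> and \<open>b\<close> with \<open>h (x, 0) < r\<close> and \<open>h > r\<close> on all points
  over \<open>]x, b[\<close>; a larger \<open>y\<close> with the same label would have \<open>(y, 0)\<close> over \<open>]x, b[\<close>.\<close>

lemma countable_upward_jumps:
  assumes "continuous_map (AA_top X) euclideanreal h"
  shows "countable {x \<in> {0<..<1} - X. h (x, 0) < h (x, 1)}"
proof (rule countable_by_unique_labels[OF countable_SIGMA[OF countable_rat countable_rat]])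
  let ?Z = "{x \<in> {0<..<1} - X. h (x, 0) < h (x, 1)}"
  let ?P = "\<lambda>(r, b) x. h (x, 0) < r \<and> x < b \<and> (\<forall>q\<in>AA X. x < fst q \<and> fst q < b \<longrightarrow> r < h q)"
  show "\<exists>l\<in>\<rat> \<times> \<rat>. ?P l x" if x: "x \<in> ?Z" for x
  proof -
    obtain r where r: "r \<in> \<rat>" "h (x, 0) < r" "r < h (x, 1)"
      using x Rats_dense_in_real by blast
    have "openin (AA_top X) {q \<in> AA X. h q \<in> {r<..}}"
      using openin_continuous_map_preimage[OF assms, of "{r<..}"] by simp
    moreover have "(x, 1) \<in> {q \<in> AA X. h q \<in> {r<..}}"
      using x r by (auto simp: mem_AA)
    ultimately obtain b where b: "x < b" "\<And>q. q \<in> AA X \<Longrightarrow> x < fst q \<Longrightarrow> fst q < b \<Longrightarrow> r < h q"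
      by (rule openin_AA_top_right) auto
    obtain b' where "b' \<in> \<rat>" "x < b'" "b' < b"
      using Rats_dense_in_real b(1) by blast
    then show ?thesis
      using r b(2) by (intro bexI[of _ "(r, b')"]) auto
  qed
  have not_less: "\<not> x < y" if "x \<in> ?Z" "y \<in> ?Z" "?P l x" "?P l y" for l x y
  proof
    assume "x < y"
    moreover have "(y, 0) \<in> AA X"
      using that(2) by (simp add: mem_AA)
    ultimately show False
      using that(3,4) by (cases l) auto
  qed
  show "x = y" if "x \<in> ?Z" "y \<in> ?Z" "?P l x" "?P l y" for l x y
    using not_less[OF that] not_less[OF that(2,1,4,3)] by linarith
qed

lemma countable_jumps:
  assumes "continuous_map (AA_top X) euclideanreal h"
  shows "countable (jumps X h)"
proof -
  have "jumps X h = {x \<in> {0<..<1} - X. h (x, 0) < h (x, 1)} \<union>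
      {x \<in> {0<..<1} - X. - h (x, 0) < - h (x, 1)}"
    by (auto simp: jumps_def)
  then show ?thesis
    using countable_upward_jumps[of X h] countable_upward_jumps[of X "\<lambda>p. - h p"] assms by simp
qed

lemma continuous_on_AA_top_left_copies:
  assumes "continuous_map (AA_top X) euclideanreal h"
  shows "continuous_on ({0<..1} - jumps X h) (\<lambda>x. h (x, 0))"
  unfolding continuous_on_iff
proof (intro ballI allI impI)
  fix x e assume x: "x \<in> {0<..1} - jumps X h" and "0 < (e :: real)"
  define U where "U = {q \<in> AA X. h q \<in> ball (h (x, 0)) e}"
  have U: "openin (AA_top X) U"
    using openin_continuous_map_preimage[OF assms, of "ball (h (x, 0)) e"] by (simp add: U_def)
  have x0: "(x, 0) \<in> U"
    using x \<open>0 < e\<close> by (simp add: U_def mem_AA)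
  obtain a where a: "a < x" "\<And>q. q \<in> AA X \<Longrightarrow> a < fst q \<Longrightarrow> fst q < x \<Longrightarrow> q \<in> U"
    using openin_AA_top_left[OF U x0] by blast
  obtain b where b: "x < b" "\<And>q. q \<in> AA X \<Longrightarrow> x < fst q \<Longrightarrow> fst q < b \<Longrightarrow> q \<in> U"
  proof -
    consider "x \<in> X" | "x = 1" | "x \<notin> X" "x \<noteq> 1"
      by blast
    then show thesis
    proof cases
      case 1
      then show ?thesis
        using openin_AA_top_right[OF U x0] that by blast
    next
      case 2
      then show ?thesis
        using that[of 2] by (auto simp: mem_AA)
    next
      case 3
      then have "(x, 1) \<in> U"
        using x \<open>0 < e\<close> by (auto simp: U_def mem_AA jumps_def)
      then show ?thesis
        using openin_AA_top_right[OF U] that by blast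
    qed
  qed
  show "\<exists>d>0. \<forall>x'\<in>{0<..1} - jumps X h. dist x' x < d \<longrightarrow> dist (h (x', 0)) (h (x, 0)) < e"
  proof (intro exI[of _ "min (x - a) (b - x)"] conjI ballI impI)
    fix x' assume x': "x' \<in> {0<..1} - jumps X h" "dist x' x < min (x - a) (b - x)"
    then have "(x', 0) \<in> AA X" "a < x'" "x' < b"
      by (auto simp: mem_AA dist_real_def)
    then have "(x', 0) \<in> U"
      using a(2) b(2) x0 by (cases x' x rule: linorder_cases) auto
    then show "dist (h (x', 0)) (h (x, 0)) < e"
      by (simp add: U_def dist_commute)
  qed (use a b in auto)
qed

lemma image_AA_subset_left_copies:
  "h ` AA X \<subseteq> (\<lambda>x. h (x, 0)) ` ({0<..1} - jumps X h) \<union> (\<lambda>x. h (x, 0)) ` jumps X h \<union>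
     (\<lambda>x. h (x, 1)) ` jumps X h \<union> {h (1, 1)}"
proof
  fix v assume "v \<in> h ` AA X"
  then obtain x i where xi: "(x, i) \<in> AA X" "v = h (x, i)"
    by auto
  show "v \<in> (\<lambda>x. h (x, 0)) ` ({0<..1} - jumps X h) \<union> (\<lambda>x. h (x, 0)) ` jumps X h \<union>
     (\<lambda>x. h (x, 1)) ` jumps X h \<union> {h (1, 1)}"
  proof (cases "i = 0 \<or> x \<in> jumps X h \<or> x = 1")
    case True
    then show ?thesis
      using xi by (auto simp: mem_AA)
  next
    case False
    then have "h (x, 1) = h (x, 0)" "x \<in> {0<..1} - jumps X h"
      using xi by (auto simp: mem_AA jumps_def)
    then show ?thesis
      using xi False by (auto simp: mem_AA)
  qed
qed

lemma card_c_image_AA_top_minus_countable: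
  assumes h: "continuous_map (AA_top X) euclideanreal h" and "uncountable (h ` AA X)" "countable N"
  shows "card_c (h ` AA X - N)"
proof -
  have "h ` AA X \<subseteq> (\<Union>n. h ` {p \<in> AA X. 1 / Suc n \<le> fst p})"
  proof
    fix v assume "v \<in> h ` AA X"
    then obtain p where p: "p \<in> AA X" "v = h p"
      by blast
    then have "0 < fst p"
      by (cases p) (simp add: mem_AA)
    then obtain n where "1 / Suc n < fst p"
      using nat_approx_posE by blast
    then have "p \<in> {p \<in> AA X. 1 / Suc n \<le> fst p}"
      using p(1) by simp
    then show "v \<in> (\<Union>n. h ` {p \<in> AA X. 1 / Suc n \<le> fst p})"
      using p(2) by blast
  qed
  have "\<exists>n. uncountable (h ` {p \<in> AA X. 1 / Suc n \<le> fst p})"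
  proof (rule ccontr)
    assume "\<nexists>n. uncountable (h ` {p \<in> AA X. 1 / Suc n \<le> fst p})"
    then have "countable (\<Union>n. h ` {p \<in> AA X. 1 / Suc n \<le> fst p})"
      by (simp add: countable_UN del: UN_simps)
    then show False
      using assms(2) countable_subset[OF \<open>h ` AA X \<subseteq> _\<close>] by blast
  qed
  then obtain n where n: "uncountable (h ` {p \<in> AA X. 1 / Suc n \<le> fst p})"
    by blast
  have "closed (h ` {p \<in> AA X. 1 / Suc n \<le> fst p})"
    by (rule closed_image_AA_top_fst_ge[OF h]) simp
  then obtain P where P: "closed P" "P \<subseteq> h ` {p \<in> AA X. 1 / Suc n \<le> fst p} - N" "card_c P"
    using n assms(3) by (rule closed_continuum_subset_avoiding)
  then have "P \<subseteq> h ` AA X - N"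
    by blast
  with P(3) show ?thesis
    by (rule card_c_mono)
qed

lemma continuous_map_AA_top_unsplit_nbhd:
  assumes "continuous_map (AA_top X) Z s" "openin Z V" "s (x, 0) \<in> V" "x \<in> X" "0 < x" "x \<le> 1"
  obtains a b where "a < x" "x < b" "\<And>z. 0 < z \<Longrightarrow> z \<le> 1 \<Longrightarrow> a < z \<Longrightarrow> z < b \<Longrightarrow> s (z, 0) \<in> V"
proof -
  have U: "openin (AA_top X) {p \<in> AA X. s p \<in> V}"
    using openin_continuous_map_preimage[OF assms(1,2)] by simp
  have fibre: "(x, i) \<in> {p \<in> AA X. s p \<in> V}" if "(x, i) \<in> AA X" for i
    using that assms(3,4) by (auto simp: mem_AA)
  obtain a b where "a < x" "x < b"
    "\<And>q. q \<in> AA X \<Longrightarrow> a < fst q \<Longrightarrow> fst q < b \<Longrightarrow> q \<in> {p \<in> AA X. s p \<in> V}"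
    using openin_AA_top_fibre[OF U assms(5,6) fibre] by metis
  then show ?thesis
    using that by (auto simp: mem_AA)
qed

text \<open>Since \<open>y = fst (s (x, 0)) \<notin> Y\<close> is split in \<open>A\<^sub>Y\<close>, the ray below \<open>(y, 1)\<close> or above \<open>(y, 0)\<close>
  is an open set over \<open>]-\<infinity>, y]\<close> or \<open>[y, \<infinity>[\<close> containing \<open>s (x, 0)\<close>; at an unsplit point
  \<open>x \<in> X\<close> its preimage contains a two-sided neighbourhood.\<close>

lemma unsplit_point_local_extreme_value:
  assumes s: "continuous_map (AA_top X) (AA_top Y) s" and x: "x \<in> X" "0 < x" "x \<le> 1"
    and y: "fst (s (x, 0)) \<notin> Y"
  defines "g \<equiv> \<lambda>z. fst (s (z, 0))"
  shows "g x \<in> local_extreme_values (\<le>) g {0<..1} \<union> local_extreme_values (\<ge>) g {0<..1}"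
proof -
  obtain y i where yi: "s (x, 0) = (y, i)"
    by fastforce
  have "(x, 0) \<in> AA X"
    using x by (simp add: mem_AA)
  then have "(y, i) \<in> AA Y"
    using continuous_map_image_subset_topspace[OF s] yi by force
  then have AA_y: "(y, 0) \<in> AA Y" "(y, 1) \<in> AA Y" "i = 0 \<or> i = 1"
    using y yi by (auto simp: mem_AA)
  show ?thesis
  proof (cases "i = 0")
    case True
    then have "s (x, 0) \<in> {q \<in> AA Y. lex_less q (y, 1)}"
      using yi AA_y by (simp add: lex_less_def)
    then obtain a b where "a < x" "x < b"
      "\<And>z. 0 < z \<Longrightarrow> z \<le> 1 \<Longrightarrow> a < z \<Longrightarrow> z < b \<Longrightarrow> s (z, 0) \<in> {q \<in> AA Y. lex_less q (y, 1)}"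
      using continuous_map_AA_top_unsplit_nbhd[OF s openin_AA_top_below[OF AA_y(2)] _ x] by blast
    moreover have "g x = y"
      using yi by (simp add: g_def)
    ultimately have "\<forall>z\<in>{0<..1}. a < z \<and> z < b \<longrightarrow> g z \<le> g x"
      by (force simp: g_def lex_less_def)
    then have "g x \<in> local_extreme_values (\<le>) g {0<..1}"
      unfolding local_extreme_values_def using x \<open>a < x\<close> \<open>x < b\<close> by auto
    then show ?thesis
      by blast
  next
    case False
    then have "s (x, 0) \<in> {q \<in> AA Y. lex_less (y, 0) q}"
      using yi AA_y by (auto simp: lex_less_def)
    then obtain a b where "a < x" "x < b"
      "\<And>z. 0 < z \<Longrightarrow> z \<le> 1 \<Longrightarrow> a < z \<Longrightarrow> z < b \<Longrightarrow> s (z, 0) \<in> {q \<in> AA Y. lex_less (y, 0) q}"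
      using continuous_map_AA_top_unsplit_nbhd[OF s openin_AA_top_above[OF AA_y(1)] _ x] by blast
    moreover have "g x = y"
      using yi by (simp add: g_def)
    ultimately have "\<forall>z\<in>{0<..1}. a < z \<and> z < b \<longrightarrow> g x \<le> g z"
      by (force simp: g_def lex_less_def)
    then have "g x \<in> local_extreme_values (\<ge>) g {0<..1}"
      unfolding local_extreme_values_def using x \<open>a < x\<close> \<open>x < b\<close> by auto
    then show ?thesis
      by blast
  qed
qed

lemma in_F_left_copies:
  assumes h: "continuous_map (AA_top X) euclideanreal h" and "h ` AA X \<subseteq> {0..1}"
  shows "in_F ({0<..1} - jumps X h) (\<lambda>x. h (x, 0))"
  unfolding in_F_def
proof (intro conjI)
  show "{0<..1} - jumps X h \<subseteq> {0..1}"
    by auto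
  have "{0..1} - ({0<..1} - jumps X h) \<subseteq> insert 0 (jumps X h)"
    by auto
  moreover have "countable (insert 0 (jumps X h))"
    using countable_jumps[OF h] by simp
  ultimately show "countable ({0..1} - ({0<..1} - jumps X h))"
    using countable_subset by blast
  show "continuous_on ({0<..1} - jumps X h) (\<lambda>x. h (x, 0))"
    using h by (rule continuous_on_AA_top_left_copies)
  have "(x, 0) \<in> AA X" if "x \<in> {0<..1}" for x
    using that by (simp add: mem_AA)
  then show "(\<lambda>x. h (x, 0)) ` ({0<..1} - jumps X h) \<subseteq> {0..1}"
    using assms(2) by blast
qed

lemma image_AA_subset_moved_values:
  fixes h :: "real \<times> nat \<Rightarrow> real" and X :: "real set"
  defines "D \<equiv> {0<..1} - jumps X h" and "g \<equiv> \<lambda>x. h (x, 0)"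
  shows "h ` AA X \<subseteq> g ` S_set D g \<union> {x \<in> D. g x = x} \<union> g ` jumps X h \<union>
    (\<lambda>x. h (x, 1)) ` jumps X h \<union> {h (1, 1)}"
proof
  fix v assume "v \<in> h ` AA X"
  then have "v \<in> g ` D \<union> g ` jumps X h \<union> (\<lambda>x. h (x, 1)) ` jumps X h \<union> {h (1, 1)}"
    using image_AA_subset_left_copies[of h X] unfolding D_def g_def by blast
  moreover have "g x \<in> g ` S_set D g \<union> {x \<in> D. g x = x}" if "x \<in> D" for x
    using that by (cases "g x = x") (auto simp: S_set_def)
  ultimately show "v \<in> g ` S_set D g \<union> {x \<in> D. g x = x} \<union> g ` jumps X h \<union>
    (\<lambda>x. h (x, 1)) ` jumps X h \<union> {h (1, 1)}"
    by blast
qed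

lemma countable_unsplit_values_outside:
  assumes s: "continuous_map (AA_top X) (AA_top Y) s" and "X \<subseteq> {0<..1}"
  shows "countable {fst (s (x, 0)) | x. x \<in> X \<and> fst (s (x, 0)) \<notin> Y}"
proof -
  let ?g = "\<lambda>z. fst (s (z, 0))"
  have "{?g x | x. x \<in> X \<and> ?g x \<notin> Y} \<subseteq>
      local_extreme_values (\<le>) ?g {0<..1} \<union> local_extreme_values (\<ge>) ?g {0<..1}"
  proof
    fix v assume "v \<in> {?g x | x. x \<in> X \<and> ?g x \<notin> Y}"
    then obtain x where x: "x \<in> X" "?g x \<notin> Y" "v = ?g x"
      by blast
    then have "0 < x" "x \<le> 1"
      using assms(2) by auto
    with s x(1) have "?g x \<in> local_extreme_values (\<le>) ?g {0<..1} \<union> local_extreme_values (\<ge>) ?g {0<..1}"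
      using x(2) by (rule unsplit_point_local_extreme_value)
    then show "v \<in> local_extreme_values (\<le>) ?g {0<..1} \<union> local_extreme_values (\<ge>) ?g {0<..1}"
      using x(3) by simp
  qed
  moreover have "countable (local_extreme_values (\<le>) ?g {0<..1} \<union> local_extreme_values (\<ge>) ?g {0<..1})"
    by (intro countable_Un countable_local_extreme_values) auto
  ultimately show ?thesis
    by (rule countable_subset)
qed

lemma countable_subset_AA:
  assumes "S \<subseteq> AA Y" "countable (fst ` S)"
  shows "countable S"
proof -
  have "S \<subseteq> fst ` S \<times> {0, 1}"
  proof
    fix p assume "p \<in> S"
    then show "p \<in> fst ` S \<times> {0, 1}"
      using assms(1) by (cases p) (force simp: mem_AA)
  qed
  moreover have "countable (fst ` S \<times> {0 :: nat, 1})"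
    using assms(2) by (intro countable_SIGMA) auto
  ultimately show ?thesis
    by (rule countable_subset)
qed

lemma countable_image_AA_top:
  fixes h :: "real \<times> nat \<Rightarrow> real" and X :: "real set"
  defines "D \<equiv> {0<..1} - jumps X h" and "g \<equiv> \<lambda>x. h (x, 0)"
  assumes h: "continuous_map (AA_top X) euclideanreal h"
    and small: "\<not> card_c (g ` S_set D g)" and fixpoints: "countable {x \<in> D. g x = x}"
  shows "countable (h ` AA X)"
proof (rule ccontr)
  let ?N = "{x \<in> D. g x = x} \<union> g ` jumps X h \<union> (\<lambda>x. h (x, 1)) ` jumps X h \<union> {h (1, 1)}"
  assume "uncountable (h ` AA X)"
  moreover have "countable ?N"
    using fixpoints countable_jumps[OF h] by simp
  ultimately have "card_c (h ` AA X - ?N)"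
    using h by (intro card_c_image_AA_top_minus_countable)
  moreover have "h ` AA X - ?N \<subseteq> g ` S_set D g"
    using image_AA_subset_moved_values[of h X] unfolding D_def g_def by blast
  ultimately show False
    using card_c_mono small by blast
qed

theorem lemma4p1:
  fixes V :: "real set" and A :: "real \<Rightarrow> real set" and I :: "real set"
    and C :: "real set \<Rightarrow> (real \<Rightarrow> real) \<Rightarrow> real set"
    and X Y :: "real set" and s :: "real \<times> nat \<Rightarrow> real \<times> nat"
  assumes I_card: "card_c I"
    and C_choice: "\<And>D f. in_F D f \<Longrightarrow>
        C D f \<subseteq> D \<and> bij_betw f (C D f) (f ` S_set D f)"
    and V_bern: "bernstein V" and V_sub: "V \<subseteq> {0<..<1}" and V_Q: "V \<inter> \<rat> = {}"
    and A_bern: "\<And>\<beta>. \<beta> \<in> I \<Longrightarrow> bernstein (A \<beta>)"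
    and A_sub: "\<And>\<beta>. \<beta> \<in> I \<Longrightarrow> A \<beta> \<subseteq> {0<..<1}"
    and A_Q: "\<And>\<beta>. \<beta> \<in> I \<Longrightarrow> A \<beta> \<inter> \<rat> = {}"
    and A_disj: "\<And>\<beta> \<gamma>. \<beta> \<in> I \<Longrightarrow> \<gamma> \<in> I \<Longrightarrow> \<beta> \<noteq> \<gamma> \<Longrightarrow> A \<beta> \<inter> A \<gamma> = {}"
    and AV_disj: "\<And>\<beta>. \<beta> \<in> I \<Longrightarrow> A \<beta> \<inter> V = {}"
    and big: "\<And>D f \<beta>. in_F D f \<Longrightarrow> card_c (f ` S_set D f) \<Longrightarrow> \<beta> \<in> I \<Longrightarrow>
        card_c (C D f \<inter> A \<beta>) \<and> card_c (f ` (C D f \<inter> A \<beta>) \<inter> V)"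
    and X_sub: "X \<subseteq> {0<..<1}" and Y_sub: "Y \<subseteq> {0<..<1}"
    and QX: "\<rat> \<inter> {0<..<1} \<subseteq> X"
    and alpha: "\<exists>\<alpha>\<in>I. A \<alpha> \<subseteq> X \<and> Y \<inter> (A \<alpha> \<union> V) = {}"
    and s_cont: "continuous_map (AA_top X) (AA_top Y) s"
  shows "countable (s ` topspace (AA_top X))"
proof -
  obtain \<alpha> where \<alpha>: "\<alpha> \<in> I" "A \<alpha> \<subseteq> X" "Y \<inter> (A \<alpha> \<union> V) = {}"
    using alpha by blast
  define h where "h = fst \<circ> s"
  define g where "g = (\<lambda>x. h (x, 0))"
  define D where "D = {0<..1} - jumps X h"
  define M where "M = {g x | x. x \<in> X \<and> g x \<notin> Y}"
  have h: "continuous_map (AA_top X) euclideanreal h"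
    unfolding h_def using s_cont continuous_map_fst_AA_top by (rule continuous_map_compose)
  have s_AA: "s ` AA X \<subseteq> AA Y"
    using continuous_map_image_subset_topspace[OF s_cont] by simp
  have "h p \<in> {0..1}" if "p \<in> AA X" for p
    using s_AA that by (cases "s p") (force simp: h_def mem_AA)
  then have "h ` AA X \<subseteq> {0..1}"
    by blast
  then have g_F: "in_F D g"
    unfolding D_def g_def using h by (intro in_F_left_copies)
  have "X \<subseteq> {0<..1}"
    using X_sub by auto
  then have "countable M"
    using countable_unsplit_values_outside[OF s_cont] by (simp add: M_def g_def h_def)
  have "\<not> card_c (g ` S_set D g)"
  proof
    assume "card_c (g ` S_set D g)"
    then have "card_c (g ` (C D g \<inter> A \<alpha>) \<inter> V)"
      using big[OF g_F _ \<alpha>(1)] by blast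
    then have "uncountable (g ` (C D g \<inter> A \<alpha>) \<inter> V)"
      by (rule card_c_imp_uncountable)
    moreover have "g ` (C D g \<inter> A \<alpha>) \<inter> V \<subseteq> M"
      using \<alpha>(2,3) by (auto simp: M_def)
    ultimately show False
      using \<open>countable M\<close> countable_subset by blast
  qed
  have "countable {x \<in> D. g x = x}"
  proof (rule countable_fixpoints_bernstein[OF _ _ _ A_bern[OF \<alpha>(1)] \<open>countable M\<close>])
    show "continuous_on D g" "D \<subseteq> {0..1}" "countable ({0..1} - D)"
      using g_F by (simp_all add: in_F_def)
    show "x \<in> M" if "x \<in> A \<alpha> \<inter> D" "g x = x" for x
      using that \<alpha>(2,3) unfolding M_def by force
  qed
  have "countable (h ` AA X)"
    using h \<open>\<not> card_c (g ` S_set D g)\<close> \<open>countable {x \<in> D. g x = x}\<close>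
    unfolding D_def g_def by (rule countable_image_AA_top)
  then show ?thesis
    using countable_subset_AA[OF s_AA] by (simp add: h_def image_comp)
qed

end
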